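(* Let $a_1,\dots,a_n\in\overline{K}$ ($n\ge2$) be pairwise distinct with $\nu(a_i)>0$ for all $i$ (a bouquet of branches passing through the origin), let $A$ be its associated magic matrix and $(\mathcal R,\gamma)$ its associated tree. Then $A$ induces an automorphism of $F=\{u\in\mathbf{C}^n:\sum_i u_i=0\}$ whose eigenvalues are the strictly positive rational numbers $$\sum_{T\in\mathcal R,\ T\supset T_1}\gamma(T)\,n(T),\qquad T_1\in\mathcal R.$$ If moreover all $a_i\in\mathbf C[[x]]$ (a bouquet of smooth curves through the origin), these eigenvalues are strictly positive integers.
   Context: $\overline{K}=\bigcup_{d\ge1}\mathbf{C}[[x^{1/d}]][1/x]$ with valuation $\nu$. Put $m_{i,j}=\nu(a_i-a_j)$ ($i\ne j$), $m_i=\sum_{j\ne i}m_{i,j}$. The associated magic matrix is $A=(\alpha_{i,j})$ with $\alpha_{i,j}=-m_{i,j}$ for $i\neq j$ and $\alpha_{i,i}=m_i$, viewed as an endomorphism of $\mathbf C^n$ in the canonical basis. Let $T_0=\{1,\dots,n\}$. A subset $T\subset T_0$ is a "rameau" if $|T|\ge2$ and for all $i,j\in T$, $i\ne j$, and $k\notin T$: $m_{i,j}>m_{i,k}=m_{j,k}$; $\mathcal R$ is the set of rameaux (it contains $T_0$, and any two are disjoint or nested). For $T\in\mathcal R$, $\alpha(T)=\inf\{m_{i,j}:i,j\in T,i\ne j\}$; for $T\ne T_0$, $\gamma(T)=\alpha(T)-\alpha(T')$ where $T'$ is the smallest element of $\mathcal R$ strictly containing $T$, and $\gamma(T_0)=\alpha(T_0)$.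 $n(T)$ denotes the cardinality of $T$. *)

theory Defs
  imports "HOL-Analysis.Analysis"
begin

text \<open>Elements of the field of Puiseux series
  K-bar = union over d of C[[x^(1/d)]][1/x] are modelled as their coefficient
  functions: a series sum_q c_q x^q is the function q |-> c_q on the rationals.\<close>

type_synonym puiseux = "rat \<Rightarrow> complex"

definition in_Kbar :: "puiseux \<Rightarrow> bool" where
  "in_Kbar a \<longleftrightarrow> (\<exists>d::nat. d \<ge> 1 \<and> (\<exists>N::int.
      \<forall>q. a q \<noteq> 0 \<longrightarrow> q * of_nat d \<in> \<int> \<and> q \<ge> of_int N))"

definition in_Cxx :: "puiseux \<Rightarrow> bool" where
  "in_Cxx a \<longleftrightarrow> (\<forall>q. a q \<noteq> 0 \<longrightarrow> q \<in> \<int> \<and> q \<ge> 0)"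

definition val :: "puiseux \<Rightarrow> rat" where
  "val a = (LEAST q. a q \<noteq> 0)"

text \<open>nu(a) > 0, with the convention nu(0) = infinity.\<close>
definition val_pos :: "puiseux \<Rightarrow> bool" where
  "val_pos a \<longleftrightarrow> (\<forall>q. a q = 0) \<or> val a > 0"

definition mm :: "('n \<Rightarrow> puiseux) \<Rightarrow> 'n \<Rightarrow> 'n \<Rightarrow> rat" where
  "mm a i j = val (\<lambda>q. a i q - a j q)"

definition mi :: "('n::finite \<Rightarrow> puiseux) \<Rightarrow> 'n \<Rightarrow> rat" where
  "mi a i = (\<Sum>j\<in>UNIV - {i}. mm a i j)"

definition magic_matrix :: "('n::finite \<Rightarrow> puiseux) \<Rightarrow> complex ^'n ^'n" where
  "magic_matrix a = (\<chi> i j. if i = j then of_rat (mi a i) else - of_rat (mm a i j))"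

definition rameaux :: "('n::finite \<Rightarrow> puiseux) \<Rightarrow> 'n set set" where
  "rameaux a = {T. card T \<ge> 2 \<and>
     (\<forall>i\<in>T. \<forall>j\<in>T. \<forall>k. i \<noteq> j \<and> k \<notin> T \<longrightarrow>
        mm a i j > mm a i k \<and> mm a i k = mm a j k)}"

definition alpha :: "('n::finite \<Rightarrow> puiseux) \<Rightarrow> 'n set \<Rightarrow> rat" where
  "alpha a T = Min {mm a i j | i j. i \<in> T \<and> j \<in> T \<and> i \<noteq> j}"

definition parent :: "('n::finite \<Rightarrow> puiseux) \<Rightarrow> 'n set \<Rightarrow> 'n set" where
  "parent a T = (THE T'. T' \<in> rameaux a \<and> T \<subset> T' \<and>
      (\<forall>T''\<in>rameaux a. T \<subset> T'' \<longrightarrow> T' \<subseteq> T''))"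

definition gamma :: "('n::finite \<Rightarrow> puiseux) \<Rightarrow> 'n set \<Rightarrow> rat" where
  "gamma a T = (if T = UNIV then alpha a T else alpha a T - alpha a (parent a T))"

definition tree_value :: "('n::finite \<Rightarrow> puiseux) \<Rightarrow> 'n set \<Rightarrow> rat" where
  "tree_value a T1 = (\<Sum>T\<in>{T\<in>rameaux a. T1 \<subseteq> T}. gamma a T * of_nat (card T))"

definition hypF :: "(complex ^'n::finite) set" where
  "hypF = {u. (\<Sum>i\<in>UNIV. u $ i) = 0}"

end

theory Submission
  imports Defs
begin

text \<open>The valuations m(i,j) form an ultrametric, and the magic matrix is the weighted Laplacian
  (A v)(i) = sum over j of m(i,j) (v(i) - v(j)): symmetric with zero row sums, so it preserves F.
  Inside a rameau T the relation m(i,j) > alpha(T) splits T into classes, the children of T in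
  the tree. For each class C the vector n(T) 1_C - n(C) 1_T lies in F and is an eigenvector for
  n(T) alpha(T) + sum over j outside T of m(i,j), which is the tree value of T once the gammas
  along the path to the root are telescoped. Conversely, since A is symmetric, an eigenvector in F
  for any other eigenvalue is orthogonal (for the bilinear form) to all these vectors; descending
  the tree this forces its sums over all rameaux and all classes, hence its coordinates, to
  vanish. Positivity of the m(i,j) makes every eigenvalue positive, so A is an automorphism of F;
  for power series all m(i,j) are integers.\<close>

section \<open>Valuations of Puiseux series\<close>

lemma in_Kbar_val:
  assumes K: "in_Kbar b" and bq: "b q \<noteq> 0"
  shows "b (val b) \<noteq> 0" and "\<And>q'. b q' \<noteq> 0 \<Longrightarrow> val b \<le> q'"
proof -
  obtain d :: nat and N :: int where d: "d \<ge> 1"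
    and supp: "\<And>q. b q \<noteq> 0 \<Longrightarrow> q * of_nat d \<in> \<int> \<and> q \<ge> of_int N"
    using K unfolding in_Kbar_def by blast
  define level :: "rat \<Rightarrow> nat" where "level q = nat (\<lfloor>q * of_nat d\<rfloor> - N * int d)" for q
  obtain q0 where q0: "b q0 \<noteq> 0" and q0_min: "\<And>q'. b q' \<noteq> 0 \<Longrightarrow> level q0 \<le> level q'"
    using ex_has_least_nat[of "\<lambda>q. b q \<noteq> 0" q level] bq by blast
  have floor_eq: "of_int \<lfloor>p * of_nat d\<rfloor> = p * of_nat d" and floor_ge: "N * int d \<le> \<lfloor>p * of_nat d\<rfloor>"
    if "b p \<noteq> 0" for p
    using supp[OF that] d by (auto simp: le_floor_iff mult_right_mono)
  \<comment> \<open>on the support, \<open>level\<close> is a strictly monotone map into \<open>\<nat>\<close>\<close>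
  have level_mono: "q \<le> q'" if "b q \<noteq> 0" "b q' \<noteq> 0" "level q \<le> level q'" for q q'
  proof -
    have "\<lfloor>q * of_nat d\<rfloor> \<le> \<lfloor>q' * of_nat d\<rfloor>"
      using that floor_ge[OF that(1)] floor_ge[OF that(2)] by (simp add: level_def)
    hence "q * of_nat d \<le> q' * of_nat d"
      using floor_eq[OF that(1)] floor_eq[OF that(2)] by (metis of_int_le_iff)
    thus ?thesis using d by simp
  qed
  have least: "\<And>q'. b q' \<noteq> 0 \<Longrightarrow> q0 \<le> q'"
    using level_mono q0 q0_min by blast
  have "val b = q0"
    unfolding val_def by (rule Least_equality) (use q0 least in auto)
  thus "b (val b) \<noteq> 0" and "\<And>q'. b q' \<noteq> 0 \<Longrightarrow> val b \<le> q'"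
    using q0 least by auto
qed

lemma in_Kbar_diff:
  assumes "in_Kbar b" "in_Kbar c"
  shows "in_Kbar (\<lambda>q. b q - c q)"
proof -
  obtain d1 :: nat and N1 :: int where d1: "d1 \<ge> 1"
    and H1: "\<And>q. b q \<noteq> 0 \<Longrightarrow> q * of_nat d1 \<in> \<int> \<and> q \<ge> of_int N1"
    using assms(1) unfolding in_Kbar_def by blast
  obtain d2 :: nat and N2 :: int where d2: "d2 \<ge> 1"
    and H2: "\<And>q. c q \<noteq> 0 \<Longrightarrow> q * of_nat d2 \<in> \<int> \<and> q \<ge> of_int N2"
    using assms(2) unfolding in_Kbar_def by blast
  have "q * of_nat (d1 * d2) \<in> \<int> \<and> q \<ge> of_int (min N1 N2)" if "b q - c q \<noteq> 0" for q
  proof -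
    from that have "b q \<noteq> 0 \<or> c q \<noteq> 0" by auto
    then show ?thesis
    proof
      assume "b q \<noteq> 0"
      with H1 have "q * of_nat d1 * of_nat d2 \<in> \<int>" "q \<ge> of_int N1" by auto
      thus ?thesis by (auto simp: mult.assoc)
    next
      assume "c q \<noteq> 0"
      with H2 have "q * of_nat d2 * of_nat d1 \<in> \<int>" "q \<ge> of_int N2" by auto
      thus ?thesis by (auto simp: mult_ac)
    qed
  qed
  moreover have "d1 * d2 \<ge> 1" using d1 d2 by (simp add: one_le_mult_iff)
  ultimately show ?thesis unfolding in_Kbar_def by blast
qed

lemma mm_commute: "mm a i j = mm a j i"
proof -
  have "(\<lambda>q. a i q - a j q \<noteq> 0) = (\<lambda>q. a j q - a i q \<noteq> 0)"
    by (auto simp: fun_eq_iff)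
  thus ?thesis unfolding mm_def val_def by simp
qed

context
  fixes a :: "'n \<Rightarrow> puiseux"
  assumes inK: "\<And>i. in_Kbar (a i)" and distinct: "inj a"
begin

lemma mm_coeff_neq:
  assumes "i \<noteq> j"
  shows "a i (mm a i j) \<noteq> a j (mm a i j)"
    and "\<And>q. a i q \<noteq> a j q \<Longrightarrow> mm a i j \<le> q"
proof -
  obtain q where "a i q \<noteq> a j q"
    using distinct assms by (metis injD ext)
  hence "(\<lambda>q. a i q - a j q) q \<noteq> 0" by simp
  note val = in_Kbar_val[OF in_Kbar_diff[OF inK inK] this]
  show "a i (mm a i j) \<noteq> a j (mm a i j)" using val(1) by (simp add: mm_def)
  show "\<And>q. a i q \<noteq> a j q \<Longrightarrow> mm a i j \<le> q" using val(2) by (simp add: mm_def)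
qed

lemma mm_ultrametric:
  assumes "i \<noteq> j" "j \<noteq> k" "i \<noteq> k"
  shows "min (mm a i j) (mm a j k) \<le> mm a i k"
proof -
  have "a i (mm a i k) \<noteq> a j (mm a i k) \<or> a j (mm a i k) \<noteq> a k (mm a i k)"
    using mm_coeff_neq(1)[OF assms(3)] by auto
  thus ?thesis using mm_coeff_neq(2)[OF assms(1)] mm_coeff_neq(2)[OF assms(2)] by force
qed

lemma mm_pos:
  assumes pos: "\<And>i. val_pos (a i)" and "i \<noteq> j"
  shows "mm a i j > 0"
proof -
  have supp_pos: "q > 0" if "a k q \<noteq> 0" for k q
  proof -
    from that pos[of k] have "val (a k) > 0" unfolding val_pos_def by auto
    moreover have "val (a k) \<le> q" using in_Kbar_val(2)[OF inK that that] .
    ultimately show "q > 0" by simp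
  qed
  show ?thesis
    using mm_coeff_neq(1)[OF \<open>i \<noteq> j\<close>] supp_pos[of i "mm a i j"] supp_pos[of j "mm a i j"] by force
qed

lemma mm_Ints:
  assumes "\<And>i. in_Cxx (a i)" and "i \<noteq> j"
  shows "mm a i j \<in> \<int>"
proof -
  have "a i (mm a i j) \<noteq> 0 \<or> a j (mm a i j) \<noteq> 0"
    using mm_coeff_neq(1)[OF \<open>i \<noteq> j\<close>] by auto
  thus ?thesis using assms(1) unfolding in_Cxx_def by blast
qed

end

section \<open>Linear algebra\<close>

lemma linear_inj_on_subspace_imp_image_eq:
  fixes f :: "'a::euclidean_space \<Rightarrow> 'a"
  assumes "linear f" "subspace S" "f ` S \<subseteq> S" "inj_on f S"
  shows "f ` S = S"
proof -
  have "dim (f ` S) = dim S"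
    using assms by (metis dim_image_eq span_eq_iff)
  moreover have "subspace (f ` S)" using assms linear_subspace_image by blast
  ultimately show ?thesis using assms subspace_dim_equal by (metis order_refl)
qed

lemma subspace_hypF: "subspace hypF"
  unfolding hypF_def subspace_def by (auto simp: sum.distrib scaleR_sum_right[symmetric])

lemma symmetric_matrix_eigenvectors_orthogonal:
  fixes M :: "'a::idom ^'n::finite ^'n"
  assumes sym: "\<And>i j. M $ i $ j = M $ j $ i"
    and u: "M *v u = c *s u" and w: "M *v w = l *s w" and "c \<noteq> l"
  shows "(\<Sum>j\<in>UNIV. w $ j * u $ j) = 0"
proof -
  have "(\<Sum>i\<in>UNIV. w $ i * (M *v u) $ i) = (\<Sum>i\<in>UNIV. \<Sum>j\<in>UNIV. w $ i * M $ i $ j * u $ j)"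
    by (simp add: matrix_vector_mult_def sum_distrib_left mult.assoc)
  also have "\<dots> = (\<Sum>j\<in>UNIV. \<Sum>i\<in>UNIV. w $ i * M $ i $ j * u $ j)"
    by (rule sum.swap)
  also have "\<dots> = (\<Sum>j\<in>UNIV. (M *v w) $ j * u $ j)"
    by (simp add: matrix_vector_mult_def sum_distrib_left sum_distrib_right sym mult_ac)
  finally have "c * (\<Sum>j\<in>UNIV. w $ j * u $ j) = l * (\<Sum>j\<in>UNIV. w $ j * u $ j)"
    unfolding u w by (simp add: sum_distrib_left mult_ac)
  thus ?thesis using \<open>c \<noteq> l\<close> by simp
qed

lemma symmetric_matrix_zero_row_sums_preserves_hypF:
  fixes M :: "complex ^'n::finite ^'n"
  assumes sym: "\<And>i j. M $ i $ j = M $ j $ i"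
    and rows: "\<And>i. (\<Sum>j\<in>UNIV. M $ i $ j) = 0"
    and "u \<in> hypF"
  shows "M *v u \<in> hypF"
proof -
  have "(\<Sum>i\<in>UNIV. (M *v u) $ i) = (\<Sum>i\<in>UNIV. \<Sum>j\<in>UNIV. M $ i $ j * u $ j)"
    by (simp add: matrix_vector_mult_def)
  also have "\<dots> = (\<Sum>j\<in>UNIV. (\<Sum>i\<in>UNIV. M $ j $ i) * u $ j)"
    by (subst sum.swap) (simp add: sum_distrib_right sym)
  also have "\<dots> = 0" by (simp add: rows)
  finally show ?thesis by (simp add: hypF_def)
qed

section \<open>The magic matrix as a weighted Laplacian\<close>

lemma magic_matrix_mult_vec_nth:
  "(magic_matrix a *v v) $ i = (\<Sum>j\<in>UNIV - {i}. of_rat (mm a i j) * (v $ i - v $ j))"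
proof -
  have "(magic_matrix a *v v) $ i
      = magic_matrix a $ i $ i * v $ i + (\<Sum>j\<in>UNIV - {i}. magic_matrix a $ i $ j * v $ j)"
    by (simp add: matrix_vector_mult_def sum.remove)
  also have "\<dots> = of_rat (mi a i) * v $ i - (\<Sum>j\<in>UNIV - {i}. of_rat (mm a i j) * v $ j)"
    by (simp add: magic_matrix_def sum_negf)
  also have "of_rat (mi a i) = (\<Sum>j\<in>UNIV - {i}. (of_rat (mm a i j) :: complex))"
    by (simp add: mi_def of_rat_sum)
  finally show ?thesis
    by (simp add: sum_distrib_right right_diff_distrib sum_subtractf)
qed

lemma magic_matrix_symmetric: "magic_matrix a $ i $ j = magic_matrix a $ j $ i"
  by (simp add: magic_matrix_def mm_commute)

lemma magic_matrix_row_sum: "(\<Sum>j\<in>UNIV. magic_matrix a $ i $ j) = 0"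
  using magic_matrix_mult_vec_nth[of a "\<chi> k. 1" i] by (simp add: matrix_vector_mult_def)

lemma magic_matrix_preserves_hypF: "u \<in> hypF \<Longrightarrow> magic_matrix a *v u \<in> hypF"
  by (rule symmetric_matrix_zero_row_sums_preserves_hypF[OF magic_matrix_symmetric magic_matrix_row_sum])

section \<open>The tree of rameaux of an ultrametric bouquet\<close>

lemma two_le_card_obtain:
  assumes "card T \<ge> 2"
  obtains x y where "x \<in> T" "y \<in> T" "x \<noteq> y"
proof -
  have "finite T" using assms card.infinite by fastforce
  moreover have "\<not> card T \<le> Suc 0" using assms by simp
  ultimately show ?thesis using that by (auto simp: card_le_Suc0_iff_eq)
qed

locale ultrametric_bouquet =
  fixes a :: "'n::finite \<Rightarrow> puiseux"
  assumes card_ge_2: "CARD('n) \<ge> 2"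
    and ultrametric: "\<And>i j k. i \<noteq> j \<Longrightarrow> j \<noteq> k \<Longrightarrow> i \<noteq> k \<Longrightarrow> min (mm a i j) (mm a j k) \<le> mm a i k"
begin

lemma rameauxD:
  assumes "T \<in> rameaux a"
  shows "card T \<ge> 2"
    and "\<And>i j k. i \<in> T \<Longrightarrow> j \<in> T \<Longrightarrow> i \<noteq> j \<Longrightarrow> k \<notin> T \<Longrightarrow> mm a i k < mm a i j"
    and "\<And>i j k. i \<in> T \<Longrightarrow> j \<in> T \<Longrightarrow> i \<noteq> j \<Longrightarrow> k \<notin> T \<Longrightarrow> mm a i k = mm a j k"
  using assms unfolding rameaux_def by blast+

lemma rameau_obtain:
  assumes "T \<in> rameaux a"
  obtains x where "x \<in> T"
  using rameauxD(1)[OF assms] two_le_card_obtain by metis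

lemma UNIV_in_rameaux: "UNIV \<in> rameaux a"
  using card_ge_2 unfolding rameaux_def by simp

lemma rameaux_nested:
  assumes R: "R \<in> rameaux a" and S: "S \<in> rameaux a" and x: "x \<in> R" "x \<in> S"
  shows "R \<subseteq> S \<or> S \<subseteq> R"
proof (rule ccontr)
  assume "\<not> (R \<subseteq> S \<or> S \<subseteq> R)"
  then obtain r s where r: "r \<in> R" "r \<notin> S" and s: "s \<in> S" "s \<notin> R" by auto
  have "mm a x r < mm a x s" using rameauxD(2)[OF S x(2) s(1) _ r(2)] x s by blast
  moreover have "mm a x s < mm a x r" using rameauxD(2)[OF R x(1) r(1) _ s(2)] x r by blast
  ultimately show False by simp
qed

lemma finite_mm_values: "finite {mm a i j | i j. i \<in> T \<and> j \<in> T \<and> i \<noteq> j}"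
  by (rule finite_subset[of _ "(\<lambda>(i, j). mm a i j) ` UNIV"]) auto

lemma alpha_le_mm: "i \<in> T \<Longrightarrow> j \<in> T \<Longrightarrow> i \<noteq> j \<Longrightarrow> alpha a T \<le> mm a i j"
  unfolding alpha_def by (rule Min_le[OF finite_mm_values]) blast

lemma alpha_attained:
  assumes "card T \<ge> 2"
  obtains x y where "x \<in> T" "y \<in> T" "x \<noteq> y" "alpha a T = mm a x y"
proof -
  obtain x y where "x \<in> T" "y \<in> T" "x \<noteq> y" using two_le_card_obtain[OF assms] .
  hence "{mm a i j | i j. i \<in> T \<and> j \<in> T \<and> i \<noteq> j} \<noteq> {}" by blast
  hence "alpha a T \<in> {mm a i j | i j. i \<in> T \<and> j \<in> T \<and> i \<noteq> j}"
    unfolding alpha_def by (rule Min_in[OF finite_mm_values])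
  thus ?thesis using that by blast
qed

text \<open>The classes are the children of \<open>T\<close> in the tree of rameaux, and singletons.\<close>

definition branch_class :: "'n set \<Rightarrow> 'n \<Rightarrow> 'n set" where
  "branch_class T x = {j \<in> T. j = x \<or> alpha a T < mm a x j}"

lemma above_level_trans:
  assumes "x = y \<or> l < mm a x y" "y = z \<or> l < mm a y z"
  shows "x = z \<or> l < mm a x z"
proof (cases "x = y \<or> y = z \<or> x = z")
  case False
  hence "min (mm a x y) (mm a y z) \<le> mm a x z" using ultrametric by blast
  thus ?thesis using assms False by auto
qed (use assms in auto)

lemma above_level_sym: "x = y \<or> l < mm a x y \<Longrightarrow> y = x \<or> l < mm a y x"
  using mm_commute by metis

lemma branch_class_subset: "branch_class T x \<subseteq> T"
  by (auto simp: branch_class_def)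

lemma branch_class_self: "x \<in> T \<Longrightarrow> x \<in> branch_class T x"
  by (auto simp: branch_class_def)

lemma branch_class_cong:
  "i \<in> T \<Longrightarrow> j \<in> T \<Longrightarrow> alpha a T < mm a i j \<Longrightarrow> i \<in> branch_class T x \<longleftrightarrow> j \<in> branch_class T x"
  unfolding branch_class_def using above_level_trans above_level_sym by blast

lemma mm_across_branch_classes:
  assumes i: "i \<in> branch_class T x" and j: "j \<in> T" "j \<notin> branch_class T x"
  shows "mm a i j = alpha a T"
proof -
  have iT: "i \<in> T" and "i \<noteq> j" using i j branch_class_subset by auto
  have "\<not> alpha a T < mm a i j" using branch_class_cong[OF iT j(1)] i j by blast
  thus ?thesis using alpha_le_mm[OF iT j(1) \<open>i \<noteq> j\<close>] by simp
qed

lemma branch_class_psubset: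
  assumes "card T \<ge> 2" "x \<in> T"
  shows "branch_class T x \<subset> T"
proof -
  obtain p q where pq: "p \<in> T" "q \<in> T" "p \<noteq> q" "alpha a T = mm a p q"
    using alpha_attained[OF assms(1)] by blast
  have "p \<notin> branch_class T x \<or> q \<notin> branch_class T x"
  proof (rule ccontr)
    assume "\<not> ?thesis"
    hence "x = p \<or> alpha a T < mm a x p" "x = q \<or> alpha a T < mm a x q"
      by (auto simp: branch_class_def)
    hence "p = q \<or> alpha a T < mm a p q"
      by (rule above_level_trans[OF above_level_sym])
    thus False using pq by simp
  qed
  thus ?thesis using branch_class_subset pq by blast
qed

lemma branch_class_in_rameaux:
  assumes T: "T \<in> rameaux a" and x: "x \<in> T" and card: "card (branch_class T x) \<ge> 2"
  shows "branch_class T x \<in> rameaux a"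
proof -
  have "mm a i k < mm a i j \<and> mm a i k = mm a j k"
    if i: "i \<in> branch_class T x" and j: "j \<in> branch_class T x" and "i \<noteq> j"
      and k: "k \<notin> branch_class T x" for i j k
  proof -
    have iT: "i \<in> T" and jT: "j \<in> T" using i j branch_class_subset by auto
    have "alpha a T < mm a i j"
      using i j \<open>i \<noteq> j\<close> above_level_trans above_level_sym unfolding branch_class_def by blast
    show ?thesis
    proof (cases "k \<in> T")
      case True
      thus ?thesis using mm_across_branch_classes[OF i True] mm_across_branch_classes[OF j True]
          k \<open>alpha a T < mm a i j\<close> by simp
    qed (use rameauxD(2,3)[OF T iT jT \<open>i \<noteq> j\<close>] in auto)
  qed
  thus ?thesis using card unfolding rameaux_def by blast
qed

lemma parent_rameau:
  assumes T: "T \<in> rameaux a" and "T \<noteq> UNIV"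
  shows "parent a T \<in> rameaux a" and "T \<subset> parent a T"
    and "\<And>T'. T' \<in> rameaux a \<Longrightarrow> T \<subset> T' \<Longrightarrow> parent a T \<subseteq> T'"
proof -
  have "UNIV \<in> rameaux a \<and> T \<subset> UNIV" using UNIV_in_rameaux \<open>T \<noteq> UNIV\<close> by auto
  then obtain P where P: "P \<in> rameaux a" "T \<subset> P"
    and P_min: "\<And>T'. T' \<in> rameaux a \<and> T \<subset> T' \<Longrightarrow> card P \<le> card T'"
    using ex_has_least_nat[of "\<lambda>T'. T' \<in> rameaux a \<and> T \<subset> T'" UNIV card] by blast
  obtain x where x: "x \<in> T" using rameau_obtain[OF T] .
  \<comment> \<open>the rameaux above \<open>T\<close> all contain \<open>x\<close>, so they form a chain\<close>
  have least: "P \<subseteq> T'" if "T' \<in> rameaux a" "T \<subset> T'" for T'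
    using rameaux_nested[OF P(1) that(1), of x] x P(2) that P_min[of T'] psubset_card_mono[of P T']
    by fastforce
  have "parent a T = P"
    unfolding parent_def by (rule the_equality) (use P least in blast)+
  thus "parent a T \<in> rameaux a" "T \<subset> parent a T"
    "\<And>T'. T' \<in> rameaux a \<Longrightarrow> T \<subset> T' \<Longrightarrow> parent a T \<subseteq> T'"
    using P least by auto
qed

lemma rameau_induct [consumes 1, case_names root parent]:
  assumes "T \<in> rameaux a"
    and root: "P UNIV"
    and parent: "\<And>T. T \<in> rameaux a \<Longrightarrow> T \<noteq> UNIV \<Longrightarrow> P (parent a T) \<Longrightarrow> P T"
  shows "P T"
  using assms(1)
proof (induction "card (- T)" arbitrary: T rule: less_induct)
  case less
  show ?case
  proof (cases "T = UNIV")
    case False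
    have "- parent a T \<subset> - T" using parent_rameau(2)[OF less.prems False] by blast
    hence "card (- parent a T) < card (- T)" by (simp add: psubset_card_mono)
    thus ?thesis using less parent_rameau(1)[OF less.prems False] parent False by blast
  qed (simp add: root)
qed

lemma branch_class_parent:
  assumes T: "T \<in> rameaux a" and TU: "T \<noteq> UNIV" and i: "i \<in> T"
  shows "branch_class (parent a T) i = T"
proof -
  let ?P = "parent a T"
  note P = parent_rameau[OF T TU]
  obtain k where k: "k \<in> ?P" "k \<notin> T" using P(2) by blast
  have iP: "i \<in> ?P" using i P(2) by blast
  have sub: "T \<subseteq> branch_class ?P i"
  proof
    fix j assume j: "j \<in> T"
    have "j = i \<or> mm a i k < mm a i j" using rameauxD(2)[OF T i j _ k(2)] by blast
    moreover have "alpha a ?P \<le> mm a i k" using alpha_le_mm[OF iP k(1)] k i by blast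
    ultimately show "j \<in> branch_class ?P i" using j P(2) by (auto simp: branch_class_def)
  qed
  show ?thesis
  proof (rule ccontr)
    assume "branch_class ?P i \<noteq> T"
    hence psub: "T \<subset> branch_class ?P i" using sub by blast
    hence "card T < card (branch_class ?P i)" by (simp add: psubset_card_mono)
    hence "branch_class ?P i \<in> rameaux a"
      using branch_class_in_rameaux[OF P(1) iP] rameauxD(1)[OF T] by simp
    hence "?P \<subseteq> branch_class ?P i" using P(3) psub by blast
    thus False using branch_class_psubset[OF rameauxD(1)[OF P(1)] iP] by blast
  qed
qed

lemma singleton_branch_class:
  obtains T where "T \<in> rameaux a" "i \<in> T" "branch_class T i = {i}"
proof -
  have "UNIV \<in> rameaux a \<and> i \<in> UNIV" using UNIV_in_rameaux by simp
  then obtain T where T: "T \<in> rameaux a" "i \<in> T"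
    and T_min: "\<And>T'. T' \<in> rameaux a \<and> i \<in> T' \<Longrightarrow> card T \<le> card T'"
    using ex_has_least_nat[of "\<lambda>T. T \<in> rameaux a \<and> i \<in> T" UNIV card] by blast
  have "card (branch_class T i) < card T"
    using branch_class_psubset[OF rameauxD(1)[OF T(1)] T(2)] by (simp add: psubset_card_mono)
  hence "card (branch_class T i) \<le> Suc 0"
    using branch_class_in_rameaux[OF T] branch_class_self[OF T(2)] T_min[of "branch_class T i"]
    by linarith
  hence "branch_class T i = {i}"
    using branch_class_self[OF T(2)] by (auto simp: card_le_Suc0_iff_eq)
  thus ?thesis using that T by blast
qed

lemma tree_value_eq:
  assumes T: "T \<in> rameaux a" and i: "i \<in> T"
  shows "tree_value a T = of_nat (card T) * alpha a T + (\<Sum>j\<in>- T. mm a i j)"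
  using T i
proof (induction T rule: rameau_induct)
  case root
  have "{T' \<in> rameaux a. UNIV \<subseteq> T'} = {UNIV}" using UNIV_in_rameaux by auto
  thus ?case by (simp add: tree_value_def gamma_def)
next
  case (parent T)
  let ?P = "parent a T"
  note P = parent_rameau[OF parent.hyps(1,2)]
  have "{T' \<in> rameaux a. T \<subseteq> T'} = insert T {T' \<in> rameaux a. ?P \<subseteq> T'}"
    using P parent.hyps(1) by (auto dest: P(3))
  moreover have "T \<notin> {T' \<in> rameaux a. ?P \<subseteq> T'}" using P(2) by blast
  ultimately have tvT: "tree_value a T = (alpha a T - alpha a ?P) * of_nat (card T) + tree_value a ?P"
    using parent.hyps(2) by (simp add: tree_value_def gamma_def)
  have cls: "branch_class ?P i = T"
    by (rule branch_class_parent[OF parent.hyps(1,2) parent.prems])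
  have split: "- T = - ?P \<union> (?P - T)" using P(2) by blast
  have "(\<Sum>j\<in>- T. mm a i j) = (\<Sum>j\<in>- ?P. mm a i j) + (\<Sum>j\<in>?P - T. mm a i j)"
    unfolding split by (rule sum.union_disjoint) auto
  also have "(\<Sum>j\<in>?P - T. mm a i j) = of_nat (card (?P - T)) * alpha a ?P"
    using mm_across_branch_classes[of i ?P i] cls parent.prems by simp
  finally have "(\<Sum>j\<in>- T. mm a i j) = (\<Sum>j\<in>- ?P. mm a i j) + of_nat (card (?P - T)) * alpha a ?P" .
  moreover have "card ?P = card T + card (?P - T)"
    using P(2) card_mono[of ?P T] by (simp add: card_Diff_subset)
  moreover have "i \<in> ?P" using parent.prems P(2) by blast
  ultimately show ?case using parent.IH tvT by (simp add: algebra_simps)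
qed

lemma tree_value_pos:
  assumes pos: "\<And>i j. i \<noteq> j \<Longrightarrow> mm a i j > 0" and T: "T \<in> rameaux a"
  shows "tree_value a T > 0"
proof -
  obtain i where i: "i \<in> T" using rameau_obtain[OF T] .
  obtain x y where "x \<noteq> y" "alpha a T = mm a x y" using alpha_attained rameauxD(1)[OF T] .
  hence "of_nat (card T) * alpha a T > 0" using pos rameauxD(1)[OF T] by simp
  moreover have "(\<Sum>j\<in>- T. mm a i j) \<ge> 0"
    using i pos by (intro sum_nonneg) (metis ComplD less_imp_le)
  ultimately show ?thesis using tree_value_eq[OF T i] by simp
qed

lemma tree_value_Ints:
  assumes ints: "\<And>i j. i \<noteq> j \<Longrightarrow> mm a i j \<in> \<int>" and T: "T \<in> rameaux a"
  shows "tree_value a T \<in> \<int>"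
proof -
  obtain i where i: "i \<in> T" using rameau_obtain[OF T] .
  obtain x y where "x \<noteq> y" "alpha a T = mm a x y" using alpha_attained rameauxD(1)[OF T] .
  hence "alpha a T \<in> \<int>" using ints by simp
  moreover have "(\<Sum>j\<in>- T. mm a i j) \<in> \<int>"
    using i ints by (intro Ints_sum) (metis ComplD)
  ultimately show ?thesis using tree_value_eq[OF T i] by simp
qed

section \<open>Eigenvectors\<close>

lemma magic_matrix_eigenvector:
  assumes T: "T \<in> rameaux a" and supp: "\<And>j. j \<notin> T \<Longrightarrow> v $ j = 0"
    and sum0: "(\<Sum>j\<in>UNIV. v $ j) = 0"
    and const: "\<And>i j. i \<in> T \<Longrightarrow> j \<in> T \<Longrightarrow> alpha a T < mm a i j \<Longrightarrow> v $ i = v $ j"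
  shows "magic_matrix a *v v = of_rat (tree_value a T) *s v"
proof -
  have sumT: "(\<Sum>j\<in>T. v $ j) = 0"
    using sum.mono_neutral_left[of UNIV T "\<lambda>j. v $ j"] supp sum0 by auto
  have inside: "(magic_matrix a *v v) $ i = of_rat (tree_value a T) * v $ i" if i: "i \<in> T" for i
  proof -
    have weight: "of_rat (mm a i j) * (v $ i - v $ j) = of_rat (alpha a T) * (v $ i - v $ j)"
      if "j \<in> T - {i}" for j
      using const[OF i, of j] alpha_le_mm[OF i, of j] that by (cases "alpha a T < mm a i j") auto
    have split: "UNIV - {i} = - T \<union> (T - {i})" using i by blast
    have "(magic_matrix a *v v) $ i
        = (\<Sum>j\<in>- T. of_rat (mm a i j) * (v $ i - v $ j)) + (\<Sum>j\<in>T - {i}. of_rat (mm a i j) * (v $ i - v $ j))"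
      unfolding magic_matrix_mult_vec_nth split by (rule sum.union_disjoint) auto
    also have "(\<Sum>j\<in>- T. of_rat (mm a i j) * (v $ i - v $ j)) = (\<Sum>j\<in>- T. of_rat (mm a i j)) * v $ i"
      using supp by (simp add: sum_distrib_right)
    also have "(\<Sum>j\<in>T - {i}. of_rat (mm a i j) * (v $ i - v $ j))
        = (\<Sum>j\<in>T - {i}. of_rat (alpha a T) * (v $ i - v $ j))"
      by (rule sum.cong[OF refl weight])
    also have "\<dots> = (\<Sum>j\<in>T. of_rat (alpha a T) * (v $ i - v $ j))"
      using i by (simp add: sum.remove)
    also have "\<dots> = of_rat (alpha a T) * of_nat (card T) * v $ i"
      by (simp add: sum_distrib_left[symmetric] sum_subtractf sumT)
    also have "(\<Sum>j\<in>- T. of_rat (mm a i j)) * v $ i + of_rat (alpha a T) * of_nat (card T) * v $ i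
        = of_rat (tree_value a T) * v $ i"
      unfolding tree_value_eq[OF T i] by (simp add: of_rat_add of_rat_mult of_rat_sum algebra_simps)
    finally show ?thesis .
  qed
  \<comment> \<open>outside \<open>T\<close>, all \<open>m\<^sub>i\<^sub>j\<close> with \<open>j \<in> T\<close> coincide, and \<open>v\<close> sums to zero on \<open>T\<close>\<close>
  have outside: "(magic_matrix a *v v) $ i = 0" if i: "i \<notin> T" for i
  proof -
    obtain x where x: "x \<in> T" using rameau_obtain[OF T] .
    have mm_const: "mm a i j = mm a i x" if "j \<in> T" for j
      using rameauxD(3)[OF T that x _ i] mm_commute by metis
    have "(magic_matrix a *v v) $ i = (\<Sum>j\<in>T. of_rat (mm a i j) * (v $ i - v $ j))"
      unfolding magic_matrix_mult_vec_nth using i supp by (intro sum.mono_neutral_right) auto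
    also have "\<dots> = of_rat (mm a i x) * - (\<Sum>j\<in>T. v $ j)"
      using i supp mm_const by (simp add: sum_distrib_left sum_negf)
    finally show ?thesis by (simp add: sumT)
  qed
  show ?thesis
    unfolding vec_eq_iff using inside outside supp by (metis vector_scalar_mult_def vec_lambda_beta mult_zero_right)
qed

definition class_eigenvector :: "'n set \<Rightarrow> 'n \<Rightarrow> complex ^'n" where
  "class_eigenvector T x = (\<chi> j. (if j \<in> branch_class T x then of_nat (card T) else 0)
                                - (if j \<in> T then of_nat (card (branch_class T x)) else 0))"

lemma class_eigenvector_pairing:
  "(\<Sum>j\<in>UNIV. class_eigenvector T x $ j * u $ j)
     = of_nat (card T) * (\<Sum>j\<in>branch_class T x. u $ j) - of_nat (card (branch_class T x)) * (\<Sum>j\<in>T. u $ j)"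
  by (simp add: class_eigenvector_def left_diff_distrib sum_subtractf if_distrib[of "\<lambda>z. z * _"]
      sum.If_cases sum_distrib_left)

lemma class_eigenvector:
  assumes T: "T \<in> rameaux a" and x: "x \<in> T"
  shows "class_eigenvector T x \<in> hypF" "class_eigenvector T x \<noteq> 0"
    "magic_matrix a *v class_eigenvector T x = of_rat (tree_value a T) *s class_eigenvector T x"
proof -
  have sum0: "(\<Sum>j\<in>UNIV. class_eigenvector T x $ j) = 0"
    using class_eigenvector_pairing[of T x "\<chi> j. 1"] branch_class_subset[of T x]
    by (simp add: Int_absorb2)
  thus "class_eigenvector T x \<in> hypF" by (simp add: hypF_def)
  have "card (branch_class T x) < card T"
    using branch_class_psubset[OF rameauxD(1)[OF T] x] by (simp add: psubset_card_mono)
  hence "class_eigenvector T x $ x \<noteq> 0"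
    using branch_class_self[OF x] x by (simp add: class_eigenvector_def)
  thus "class_eigenvector T x \<noteq> 0" by auto
  show "magic_matrix a *v class_eigenvector T x = of_rat (tree_value a T) *s class_eigenvector T x"
  proof (rule magic_matrix_eigenvector[OF T _ sum0])
    fix j assume "j \<notin> T"
    thus "class_eigenvector T x $ j = 0"
      using branch_class_subset[of T x] by (auto simp: class_eigenvector_def)
  next
    fix i j assume "i \<in> T" "j \<in> T" "alpha a T < mm a i j"
    thus "class_eigenvector T x $ i = class_eigenvector T x $ j"
      using branch_class_cong[of i T j x] by (simp add: class_eigenvector_def)
  qed
qed

lemma eigenvalue_imp_tree_value:
  assumes u: "u \<in> hypF" "u \<noteq> 0" and eig: "magic_matrix a *v u = c *s u"
  shows "c \<in> (\<lambda>T. of_rat (tree_value a T)) ` rameaux a"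
proof (rule ccontr)
  assume c: "c \<notin> (\<lambda>T. of_rat (tree_value a T)) ` rameaux a"
  define S where "S A = (\<Sum>j\<in>A. u $ j)" for A
  have orth: "of_nat (card T) * S (branch_class T x) = of_nat (card (branch_class T x)) * S T"
    if T: "T \<in> rameaux a" and "x \<in> T" for T x
    using symmetric_matrix_eigenvectors_orthogonal[OF magic_matrix_symmetric eig
        class_eigenvector(3)[OF that]] c T
    unfolding class_eigenvector_pairing S_def by force
  have S_rameau: "S T = 0" if "T \<in> rameaux a" for T
    using that
  proof (induction T rule: rameau_induct)
    case root thus ?case using u(1) by (simp add: S_def hypF_def)
  next
    case (parent T)
    note P = parent_rameau[OF parent.hyps(1,2)]
    obtain i where i: "i \<in> T" using rameau_obtain[OF parent.hyps(1)] .
    have iP: "i \<in> parent a T" using i P(2) by blast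
    from orth[OF P(1) iP] have "of_nat (card (parent a T)) * S T = 0"
      using branch_class_parent[OF parent.hyps(1,2) i] parent.IH by simp
    thus ?case using iP by auto
  qed
  have "u $ i = 0" for i
  proof -
    obtain T where T: "T \<in> rameaux a" "i \<in> T" "branch_class T i = {i}"
      using singleton_branch_class .
    show ?thesis using orth[OF T(1,2)] S_rameau[OF T(1)] T(2,3) by (auto simp: S_def)
  qed
  thus False using u(2) by (simp add: vec_eq_iff)
qed

theorem magic_matrix_eigenvalues:
  "{c. \<exists>u\<in>hypF. u \<noteq> 0 \<and> magic_matrix a *v u = c *s u} = (\<lambda>T. of_rat (tree_value a T)) ` rameaux a"
proof
  show "(\<lambda>T. of_rat (tree_value a T)) ` rameaux a \<subseteq> {c. \<exists>u\<in>hypF. u \<noteq> 0 \<and> magic_matrix a *v u = c *s u}"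
  proof clarify
    fix T assume T: "T \<in> rameaux a"
    obtain x where "x \<in> T" using rameau_obtain[OF T] .
    thus "\<exists>u\<in>hypF. u \<noteq> 0 \<and> magic_matrix a *v u = of_rat (tree_value a T) *s u"
      using class_eigenvector[OF T] by blast
  qed
qed (use eigenvalue_imp_tree_value in blast)

lemma magic_matrix_bij_hypF:
  assumes nonzero: "\<And>T. T \<in> rameaux a \<Longrightarrow> tree_value a T \<noteq> 0"
  shows "bij_betw (\<lambda>u. magic_matrix a *v u) hypF hypF"
proof -
  have "u = w" if uw: "u \<in> hypF" "w \<in> hypF" "magic_matrix a *v u = magic_matrix a *v w" for u w
  proof (rule ccontr)
    assume "u \<noteq> w"
    moreover have "u - w \<in> hypF" by (rule subspace_diff[OF subspace_hypF uw(1,2)])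
    moreover have "magic_matrix a *v (u - w) = 0 *s (u - w)"
      using uw(3) by (simp add: matrix_vector_mult_diff_distrib)
    ultimately have "(0::complex) \<in> (\<lambda>T. of_rat (tree_value a T)) ` rameaux a"
      using eigenvalue_imp_tree_value[of "u - w" 0] by simp
    thus False using nonzero by fastforce
  qed
  hence inj: "inj_on (\<lambda>u. magic_matrix a *v u) hypF" by (rule inj_onI)
  have "(\<lambda>u. magic_matrix a *v u) ` hypF = hypF"
    by (rule linear_inj_on_subspace_imp_image_eq)
      (use subspace_hypF inj magic_matrix_preserves_hypF in auto)
  thus ?thesis using inj by (simp add: bij_betw_def)
qed

end

theorem mainTheorem2:
  fixes a :: "'n::finite \<Rightarrow> puiseux"
  assumes n2: "CARD('n) \<ge> 2"
    and inK: "\<And>i. in_Kbar (a i)"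
    and distinct: "inj a"
    and pos: "\<And>i. val_pos (a i)"
  shows "(\<forall>u\<in>hypF. magic_matrix a *v u \<in> hypF)
       \<and> bij_betw (\<lambda>u. magic_matrix a *v u) hypF hypF
       \<and> {c. \<exists>u\<in>hypF. u \<noteq> 0 \<and> magic_matrix a *v u = c *s u}
           = (\<lambda>T1. of_rat (tree_value a T1)) ` rameaux a
       \<and> (\<forall>T1\<in>rameaux a. tree_value a T1 > 0)
       \<and> ((\<forall>i. in_Cxx (a i)) \<longrightarrow> (\<forall>T1\<in>rameaux a. tree_value a T1 \<in> \<int>))"
proof -
  interpret ultrametric_bouquet a
    using n2 mm_ultrametric[OF inK distinct] by unfold_locales
  have positive: "\<forall>T\<in>rameaux a. tree_value a T > 0"
    using tree_value_pos mm_pos[OF inK distinct pos] by blast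
  have "(\<forall>i. in_Cxx (a i)) \<longrightarrow> (\<forall>T\<in>rameaux a. tree_value a T \<in> \<int>)"
    using tree_value_Ints mm_Ints[OF inK distinct] by blast
  moreover have "bij_betw (\<lambda>u. magic_matrix a *v u) hypF hypF"
    using magic_matrix_bij_hypF positive by force
  ultimately show ?thesis
    using magic_matrix_preserves_hypF magic_matrix_eigenvalues positive by blast
qed

end
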